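(* Let $(X,Y,R)$ be a random triple with $X\in\mathbb{R}^d$, $Y\in\{0,1\}$, $R\in\{0,1\}$, $P(Y=y,R=r)>0$ for all $y,r$, and with strictly positive conditional Lebesgue densities $p(x\mid Y=y,R=r)$; write $p(x,y\mid R=r)=p(x\mid Y=y,R=r)P(Y=y\mid R=r)$, $p(x\mid R=r)$ for the density of $X$ given $R=r$, and $\eta_1(x)=P(Y=1\mid X=x,R=1)$. Let $T:\mathbb{R}^d\to\mathbb{R}^k$ be measurable, $t=T(x)$, $T=T(X)$, and for $\theta=(\alpha_0,\alpha_1,\beta_0,\beta_1)$ let $$q_\theta(x)=e^{\alpha_1+\beta_1^\top t}p(x,1\mid R=1)+e^{\alpha_0+\beta_0^\top t}p(x,0\mid R=1),\qquad \mathbf{R}(\theta)=\mathrm{KL}\big(p(\cdot\mid R=0);q_\theta\big).$$ Then the problem $$\min_\theta \mathbf{R}(\theta)\quad\text{subject to}\quad \int q_\theta(x)\,dx=1$$ is equivalent to the problem $$\min_\theta \mathbb{E}\big[-\log\{e^{\alpha_1+\beta_1^\top T}\eta_1(X)+e^{\alpha_0+\beta_0^\top T}(1-\eta_1(X))\}\bigm| R=0\big]$$ $$\text{subject to}\quad \mathbb{E}\big[e^{\alpha_1+\beta_1^\top T}\eta_1(X)+e^{\alpha_0+\beta_0^\top T}(1-\eta_1(X))\bigm| R=1\big]=1.$$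
   Context: $\mathrm{KL}(p;q)=\int p(x)\log\{p(x)/q(x)\}\,dx$ is the Kullback–Leibler divergence. $R=1$ indicates that $Y$ is observed and $R=0$ that it is missing.
   Formalization: $\mathrm{KL}(p(\cdot\mid R=0);p(\cdot\mid R=1))$ is finite (its integrand is integrable), and equivalence means that the two problems have the same constraint sets and the same minimizers. Apart from conventions, each condition added here is assumed in the paper as well or is needed for the statement above to hold. *)

theory Defs
  imports "HOL-Analysis.Analysis"
begin

text \<open>Joint probabilities P y r = P(Y=y, R=r) (y, r in {0,1}); conditional
  Lebesgue densities f y r x = p(x | Y=y, R=r) on R^d (type real^'d).\<close>

definition PR :: "(nat \<Rightarrow> nat \<Rightarrow> real) \<Rightarrow> nat \<Rightarrow> real" where
  "PR P r = P 0 r + P 1 r"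

definition pxy :: "(nat \<Rightarrow> nat \<Rightarrow> 'a \<Rightarrow> real) \<Rightarrow> (nat \<Rightarrow> nat \<Rightarrow> real) \<Rightarrow> 'a \<Rightarrow> nat \<Rightarrow> nat \<Rightarrow> real" where
  "pxy f P x y r = f y r x * (P y r / PR P r)"

definition pxr :: "(nat \<Rightarrow> nat \<Rightarrow> 'a \<Rightarrow> real) \<Rightarrow> (nat \<Rightarrow> nat \<Rightarrow> real) \<Rightarrow> nat \<Rightarrow> 'a \<Rightarrow> real" where
  "pxr f P r x = pxy f P x 0 r + pxy f P x 1 r"

definition eta1 :: "(nat \<Rightarrow> nat \<Rightarrow> 'a \<Rightarrow> real) \<Rightarrow> (nat \<Rightarrow> nat \<Rightarrow> real) \<Rightarrow> 'a \<Rightarrow> real" where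
  "eta1 f P x = pxy f P x 1 1 / pxr f P 1 x"

definition qth :: "(nat \<Rightarrow> nat \<Rightarrow> 'a \<Rightarrow> real) \<Rightarrow> (nat \<Rightarrow> nat \<Rightarrow> real) \<Rightarrow> ('a \<Rightarrow> 'k::real_inner)
    \<Rightarrow> real \<times> real \<times> 'k \<times> 'k \<Rightarrow> 'a \<Rightarrow> real" where
  "qth f P T \<theta> x = (case \<theta> of (a0, a1, b0, b1) \<Rightarrow>
      exp (a1 + b1 \<bullet> T x) * pxy f P x 1 1 + exp (a0 + b0 \<bullet> T x) * pxy f P x 0 1)"

definition wth :: "(nat \<Rightarrow> nat \<Rightarrow> 'a \<Rightarrow> real) \<Rightarrow> (nat \<Rightarrow> nat \<Rightarrow> real) \<Rightarrow> ('a \<Rightarrow> 'k::real_inner)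
    \<Rightarrow> real \<times> real \<times> 'k \<times> 'k \<Rightarrow> 'a \<Rightarrow> real" where
  "wth f P T \<theta> x = (case \<theta> of (a0, a1, b0, b1) \<Rightarrow>
      exp (a1 + b1 \<bullet> T x) * eta1 f P x + exp (a0 + b0 \<bullet> T x) * (1 - eta1 f P x))"

definition ext_integral :: "'a measure \<Rightarrow> ('a \<Rightarrow> real) \<Rightarrow> ereal" where
  "ext_integral M g = enn2ereal (\<integral>\<^sup>+ x. ennreal (g x) \<partial>M) - enn2ereal (\<integral>\<^sup>+ x. ennreal (- g x) \<partial>M)"

definition KL :: "('a::euclidean_space \<Rightarrow> real) \<Rightarrow> ('a \<Rightarrow> real) \<Rightarrow> ereal" where
  "KL p q = ext_integral lborel (\<lambda>x. p x * ln (p x / q x))"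

definition is_argmin :: "('t \<Rightarrow> bool) \<Rightarrow> ('t \<Rightarrow> ereal) \<Rightarrow> 't \<Rightarrow> bool" where
  "is_argmin C F \<theta> \<longleftrightarrow> C \<theta> \<and> (\<forall>\<theta>'. C \<theta>' \<longrightarrow> F \<theta> \<le> F \<theta>')"

end

theory Submission
  imports Defs
begin

text \<open>Because p(x | R=1) = p(x,0 | R=1) + p(x,1 | R=1) and eta1 = p(x,1 | R=1) / p(x | R=1),
  the tilted density factors as q_theta = p(x | R=1) w_theta, where w_theta is the integrand
  of the second problem; hence the two constraints coincide. Moreover
  log (p0 / q_theta) = log (p0 / p1) - log w_theta, and the first term has a finite integral
  KL(p0; p1), so R(theta) and the second objective differ by a finite constant. This remains
  true in extended-real arithmetic when the second objective is infinite, since adding an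
  integrable function does not change which of the positive and negative parts has an
  infinite integral. A finite additive constant does not change the minimisers.\<close>

lemma ext_integral_integrable:
  assumes "integrable M u"
  shows "ext_integral M u = ereal (integral\<^sup>L M u)"
proof -
  obtain r q where "0 \<le> r" "0 \<le> q"
    "(\<integral>\<^sup>+ x. ennreal (u x) \<partial>M) = ennreal r" "(\<integral>\<^sup>+ x. ennreal (- u x) \<partial>M) = ennreal q"
    "integral\<^sup>L M u = r - q"
    using integrableE[OF assms] by metis
  then show ?thesis by (simp add: ext_integral_def)
qed

text \<open>This includes the case where both parts are infinite, as \<open>\<infinity> - \<infinity> = \<infinity>\<close> in \<^typ>\<open>ereal\<close>.\<close>

lemma ext_integral_eq_PInf:
  "(\<integral>\<^sup>+ x. ennreal (u x) \<partial>M) = \<infinity> \<Longrightarrow> ext_integral M u = \<infinity>"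
  by (simp add: ext_integral_def)

lemma ext_integral_eq_MInf:
  assumes "(\<integral>\<^sup>+ x. ennreal (u x) \<partial>M) \<noteq> \<infinity>" "(\<integral>\<^sup>+ x. ennreal (- u x) \<partial>M) = \<infinity>"
  shows "ext_integral M u = - \<infinity>"
  using assms by (cases "\<integral>\<^sup>+ x. ennreal (u x) \<partial>M" rule: ennreal_cases) (auto simp: ext_integral_def)

lemma ennreal_add_le_norm_plus: "ennreal (a + b) \<le> ennreal (norm a) + ennreal b" for a b :: real
proof (cases "b \<ge> 0")
  case True
  have "ennreal (a + b) \<le> ennreal (norm a + b)" by (rule ennreal_leI) simp
  also have "\<dots> = ennreal (norm a) + ennreal b" using True by (simp add: ennreal_plus)
  finally show ?thesis .
next
  case False
  then have "ennreal (a + b) \<le> ennreal (norm a)" by (intro ennreal_leI) simp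
  then show ?thesis using False by (simp add: ennreal_neg)
qed

lemma nn_integral_ennreal_add_le:
  assumes "g \<in> borel_measurable M" "h \<in> borel_measurable M"
  shows "(\<integral>\<^sup>+ x. ennreal (g x + h x) \<partial>M)
    \<le> (\<integral>\<^sup>+ x. ennreal (norm (g x)) \<partial>M) + (\<integral>\<^sup>+ x. ennreal (h x) \<partial>M)"
proof -
  have "(\<integral>\<^sup>+ x. ennreal (g x + h x) \<partial>M) \<le> (\<integral>\<^sup>+ x. ennreal (norm (g x)) + ennreal (h x) \<partial>M)"
    by (intro nn_integral_mono ennreal_add_le_norm_plus)
  also have "\<dots> = (\<integral>\<^sup>+ x. ennreal (norm (g x)) \<partial>M) + (\<integral>\<^sup>+ x. ennreal (h x) \<partial>M)"
    using assms by (intro nn_integral_add) auto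
  finally show ?thesis .
qed

lemma nn_integral_integrable_add_eq_top_iff:
  assumes g: "integrable M g" and h: "h \<in> borel_measurable M"
  shows "(\<integral>\<^sup>+ x. ennreal (g x + h x) \<partial>M) = \<infinity> \<longleftrightarrow> (\<integral>\<^sup>+ x. ennreal (h x) \<partial>M) = \<infinity>"
proof -
  let ?G = "\<integral>\<^sup>+ x. ennreal (norm (g x)) \<partial>M"
  have gm: "g \<in> borel_measurable M" and G: "?G < \<infinity>"
    using g by (auto simp: integrable_iff_bounded)
  have "(\<integral>\<^sup>+ x. ennreal (g x + h x) \<partial>M) \<le> ?G + (\<integral>\<^sup>+ x. ennreal (h x) \<partial>M)"
    using gm h by (rule nn_integral_ennreal_add_le)
  moreover have "(\<integral>\<^sup>+ x. ennreal (- g x + (g x + h x)) \<partial>M) \<le> ?G + (\<integral>\<^sup>+ x. ennreal (g x + h x) \<partial>M)"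
    using nn_integral_ennreal_add_le[of "\<lambda>x. - g x" M "\<lambda>x. g x + h x"] gm h by simp
  ultimately show ?thesis
    using G by (auto simp: top_unique ennreal_add_eq_top less_top)
qed

lemma ext_integral_add:
  assumes g: "integrable M g" and h: "h \<in> borel_measurable M"
  shows "ext_integral M (\<lambda>x. g x + h x) = ereal (integral\<^sup>L M g) + ext_integral M h"
proof (cases "integrable M h")
  case True
  then show ?thesis using g by (simp add: ext_integral_integrable)
next
  case False
  have pos: "(\<integral>\<^sup>+ x. ennreal (g x + h x) \<partial>M) = \<infinity> \<longleftrightarrow> (\<integral>\<^sup>+ x. ennreal (h x) \<partial>M) = \<infinity>"
    using g h by (rule nn_integral_integrable_add_eq_top_iff)
  have neg: "(\<integral>\<^sup>+ x. ennreal (- (g x + h x)) \<partial>M) = \<infinity> \<longleftrightarrow> (\<integral>\<^sup>+ x. ennreal (- h x) \<partial>M) = \<infinity>"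
    using nn_integral_integrable_add_eq_top_iff[of M "\<lambda>x. - g x" "\<lambda>x. - h x"] g h by simp
  consider "(\<integral>\<^sup>+ x. ennreal (h x) \<partial>M) = \<infinity>"
    | "(\<integral>\<^sup>+ x. ennreal (h x) \<partial>M) \<noteq> \<infinity>" "(\<integral>\<^sup>+ x. ennreal (- h x) \<partial>M) = \<infinity>"
    using False h by (auto simp: real_integrable_def)
  then show ?thesis
  proof cases
    case 1
    then show ?thesis using pos by (simp add: ext_integral_eq_PInf)
  next
    case 2
    then show ?thesis using pos neg by (simp add: ext_integral_eq_MInf)
  qed
qed

lemma is_argmin_add_const:
  "is_argmin C (\<lambda>\<theta>. ereal c + F \<theta>) \<theta> \<longleftrightarrow> is_argmin C F \<theta>"
proof -
  have "ereal c + a \<le> ereal c + b \<longleftrightarrow> a \<le> b" for a b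
    by (cases a; cases b) auto
  then show ?thesis by (simp add: is_argmin_def)
qed

lemma KL_mult_eq:
  fixes p p1 w :: "'a::euclidean_space \<Rightarrow> real"
  assumes pos: "\<And>x. p x > 0" "\<And>x. p1 x > 0" "\<And>x. w x > 0"
    and KL_fin: "integrable lborel (\<lambda>x. p x * ln (p x / p1 x))"
    and meas: "(\<lambda>x. p x * - ln (w x)) \<in> borel_measurable lborel"
  shows "KL p (\<lambda>x. p1 x * w x)
    = ereal (\<integral>x. p x * ln (p x / p1 x) \<partial>lborel) + ext_integral lborel (\<lambda>x. p x * - ln (w x))"
proof -
  have "p x * ln (p x / (p1 x * w x)) = p x * ln (p x / p1 x) + p x * - ln (w x)" for x
    using pos[of x] by (simp add: ln_div ln_mult algebra_simps)
  then show ?thesis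
    unfolding KL_def using ext_integral_add[OF KL_fin meas] by simp
qed

lemma pxy_pos:
  assumes "P 0 r > 0" "P 1 r > 0" "f y r x > 0" "y \<in> {0, 1}"
  shows "pxy f P x y r > 0"
  using assms by (auto simp: pxy_def PR_def)

lemma qth_eq_pxr_mult_wth:
  assumes "pxr f P 1 x \<noteq> 0"
  shows "qth f P T \<theta> x = pxr f P 1 x * wth f P T \<theta> x"
proof -
  have "1 - pxy f P x 1 1 / pxr f P 1 x = pxy f P x 0 1 / pxr f P 1 x"
    using assms by (simp add: pxr_def field_simps)
  then show ?thesis
    using assms by (cases \<theta>) (simp add: qth_def wth_def eta1_def distrib_left)
qed

lemma wth_pos:
  assumes "pxy f P x 0 1 > 0" "pxy f P x 1 1 > 0"
  shows "wth f P T \<theta> x > 0"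
proof -
  have "pxr f P 1 x > 0"
    using assms by (simp add: pxr_def)
  moreover have "qth f P T \<theta> x > 0"
    using assms by (cases \<theta>) (simp add: qth_def add_pos_pos)
  ultimately show ?thesis
    by (simp add: qth_eq_pxr_mult_wth zero_less_mult_iff)
qed

lemma borel_measurable_wth:
  fixes T :: "'a \<Rightarrow> 'k::euclidean_space"
  assumes "f 0 1 \<in> borel_measurable M" "f 1 1 \<in> borel_measurable M" "T \<in> borel_measurable M"
  shows "wth f P T \<theta> \<in> borel_measurable M"
proof -
  obtain a0 a1 b0 b1 where "\<theta> = (a0, a1, b0, b1)"
    by (cases \<theta>) auto
  then show ?thesis
    unfolding wth_def eta1_def pxr_def pxy_def using assms by simp measurable
qed

theorem lemma9:
  fixes f :: "nat \<Rightarrow> nat \<Rightarrow> real ^ 'd \<Rightarrow> real"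
    and P :: "nat \<Rightarrow> nat \<Rightarrow> real"
    and T :: "real ^ 'd \<Rightarrow> real ^ 'k"
  assumes P_pos: "\<And>y r. y \<in> {0, 1} \<Longrightarrow> r \<in> {0, 1} \<Longrightarrow> P y r > 0"
    and P_sum: "P 0 0 + P 0 1 + P 1 0 + P 1 1 = 1"
    and f_meas: "\<And>y r. y \<in> {0, 1} \<Longrightarrow> r \<in> {0, 1} \<Longrightarrow> f y r \<in> borel_measurable lborel"
    and f_pos: "\<And>y r x. y \<in> {0, 1} \<Longrightarrow> r \<in> {0, 1} \<Longrightarrow> f y r x > 0"
    and f_dens: "\<And>y r. y \<in> {0, 1} \<Longrightarrow> r \<in> {0, 1} \<Longrightarrow> (\<integral>\<^sup>+ x. ennreal (f y r x) \<partial>lborel) = 1"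
    and T_meas: "T \<in> borel_measurable lborel"
    and KL_fin: "integrable lborel (\<lambda>x. pxr f P 0 x * ln (pxr f P 0 x / pxr f P 1 x))"
  shows "(\<forall>\<theta>. ((\<integral>\<^sup>+ x. ennreal (qth f P T \<theta> x) \<partial>lborel) = 1)
              \<longleftrightarrow> ((\<integral>\<^sup>+ x. ennreal (pxr f P 1 x * wth f P T \<theta> x) \<partial>lborel) = 1))
       \<and> (\<forall>\<theta>. is_argmin (\<lambda>\<theta>. (\<integral>\<^sup>+ x. ennreal (qth f P T \<theta> x) \<partial>lborel) = 1)
                         (\<lambda>\<theta>. KL (pxr f P 0) (qth f P T \<theta>)) \<theta>
              \<longleftrightarrow> is_argmin (\<lambda>\<theta>. (\<integral>\<^sup>+ x. ennreal (pxr f P 1 x * wth f P T \<theta> x) \<partial>lborel) = 1)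
                         (\<lambda>\<theta>. ext_integral lborel (\<lambda>x. pxr f P 0 x * - ln (wth f P T \<theta> x))) \<theta>)"
proof -
  have pxy_gt0: "pxy f P x y r > 0" if "y \<in> {0, 1}" "r \<in> {0, 1}" for x y r
    using that by (intro pxy_pos P_pos f_pos) auto
  have p0_pos: "pxr f P 0 x > 0" and p1_pos: "pxr f P 1 x > 0" for x
    using pxy_gt0 by (simp_all add: pxr_def add_pos_pos)
  have w_pos: "wth f P T \<theta> x > 0" for \<theta> x
    using pxy_gt0 by (intro wth_pos) auto
  have q_eq: "qth f P T \<theta> = (\<lambda>x. pxr f P 1 x * wth f P T \<theta> x)" for \<theta>
    using qth_eq_pxr_mult_wth p1_pos by (metis less_irrefl)
  have "(\<lambda>x. pxr f P 0 x * - ln (wth f P T \<theta> x)) \<in> borel_measurable lborel" for \<theta>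
    using f_meas T_meas borel_measurable_wth[of f lborel T P \<theta>]
    unfolding pxr_def pxy_def by simp measurable
  then have KL_eq: "KL (pxr f P 0) (qth f P T \<theta>)
      = ereal (\<integral>x. pxr f P 0 x * ln (pxr f P 0 x / pxr f P 1 x) \<partial>lborel)
        + ext_integral lborel (\<lambda>x. pxr f P 0 x * - ln (wth f P T \<theta> x))" for \<theta>
    unfolding q_eq using p0_pos p1_pos w_pos KL_fin by (intro KL_mult_eq)
  show ?thesis
    unfolding KL_eq is_argmin_add_const unfolding q_eq by simp
qed

end
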